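(* Let $A\in\mathrm{GL}_{n}(\mathbb{Z})$ be irreducible. Then the semidirect product $\mathbb{Z}^{n}\rtimes_{A}\mathbb{Z}$ admits a purely positive length function if and only if $A$ has an eigenvalue of absolute value $1$.
   Context: $\mathbb{Z}^{n}\rtimes_{A}\mathbb{Z}$ is the semidirect product in which a generator of $\mathbb{Z}$ acts on $\mathbb{Z}^n$ by $A$. $A$ is irreducible if $\mathbb{Z}^n$ has no nonzero proper $A$-invariant subgroup $I$ with $\mathbb{Z}^n/I$ torsion-free (equivalently, $\mathbb{Q}^n$ has no nonzero proper $A$-invariant subspace). A length function on a group $G$ is a function $l:G\to[0,\infty)$ such that $l(g^{n})=|n|\,l(g)$ for all $g\in G,n\in\mathbb{Z}$; $l(hgh^{-1})=l(g)$ for all $g,h$; and $l(ab)\leq l(a)+l(b)$ whenever $a,b$ commute. It is purely positive if $l(g)>0$ for every element of infinite order. *)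

theory Defs
  imports "HOL-Analysis.Analysis" "HOL-Algebra.Group"
begin

fun matpow :: "'a::semiring_1^'n^'n \<Rightarrow> nat \<Rightarrow> 'a^'n^'n" where
  "matpow A 0 = mat 1"
| "matpow A (Suc k) = A ** matpow A k"

definition matipow :: "'a::semiring_1^'n^'n \<Rightarrow> int \<Rightarrow> 'a^'n^'n" where
  "matipow A k = (if 0 \<le> k then matpow A (nat k) else matpow (matrix_inv A) (nat (- k)))"

text \<open>The semidirect product Z^n \<rtimes>_A Z: elements (v,k), with the generator (0,1) of Z
  acting on Z^n by A, i.e. (v,k)(w,m) = (v + A^k w, k+m).\<close>
definition semidirect :: "int^'n^'n \<Rightarrow> ((int^'n) \<times> int) monoid" where
  "semidirect A = \<lparr> carrier = UNIV,
      mult = (\<lambda>(v,k) (w,m). (v + matipow A k *v w, k + m)),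
      one = (0, 0) \<rparr>"

text \<open>A is irreducible: Z^n has no nonzero proper A-invariant subgroup I with Z^n/I torsion-free.\<close>
definition irreducible_mat :: "int^'n^'n \<Rightarrow> bool" where
  "irreducible_mat A \<longleftrightarrow>
    \<not> (\<exists>I :: (int^'n) set.
        0 \<in> I \<and> (\<forall>x\<in>I. \<forall>y\<in>I. x + y \<in> I) \<and> (\<forall>x\<in>I. - x \<in> I)
        \<and> I \<noteq> {0} \<and> I \<noteq> UNIV
        \<and> (\<forall>x\<in>I. A *v x \<in> I)
        \<and> (\<forall>(c::int) x. c \<noteq> 0 \<longrightarrow> c *s x \<in> I \<longrightarrow> x \<in> I))"

definition length_function :: "('g, 'b) monoid_scheme \<Rightarrow> ('g \<Rightarrow> real) \<Rightarrow> bool" where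
  "length_function G l \<longleftrightarrow>
     (\<forall>g\<in>carrier G. 0 \<le> l g)
   \<and> (\<forall>g\<in>carrier G. \<forall>n::int. l (g [^]\<^bsub>G\<^esub> n) = \<bar>real_of_int n\<bar> * l g)
   \<and> (\<forall>g\<in>carrier G. \<forall>h\<in>carrier G. l (h \<otimes>\<^bsub>G\<^esub> g \<otimes>\<^bsub>G\<^esub> inv\<^bsub>G\<^esub> h) = l g)
   \<and> (\<forall>a\<in>carrier G. \<forall>b\<in>carrier G. a \<otimes>\<^bsub>G\<^esub> b = b \<otimes>\<^bsub>G\<^esub> a \<longrightarrow>
          l (a \<otimes>\<^bsub>G\<^esub> b) \<le> l a + l b)"

definition infinite_order :: "('g, 'b) monoid_scheme \<Rightarrow> 'g \<Rightarrow> bool" where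
  "infinite_order G g \<longleftrightarrow> (\<forall>n::nat. 0 < n \<longrightarrow> g [^]\<^bsub>G\<^esub> n \<noteq> \<one>\<^bsub>G\<^esub>)"

definition purely_positive :: "('g, 'b) monoid_scheme \<Rightarrow> ('g \<Rightarrow> real) \<Rightarrow> bool" where
  "purely_positive G l \<longleftrightarrow> length_function G l \<and>
     (\<forall>g\<in>carrier G. infinite_order G g \<longrightarrow> 0 < l g)"

definition cmat :: "int^'n^'n \<Rightarrow> complex^'n^'n" where
  "cmat A = (\<chi> i j. of_int (A $ i $ j))"

end

theory Submission
  imports Defs "HOL-Computational_Algebra.Fundamental_Theorem_Algebra"
begin

(*
  A purely positive length function l on the semidirect product restricts to an A-invariant norm
  N v = l (v, 0) on the lattice Z^n: invariance comes from conjugating by the generator of Z,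
  positivity from pure positivity. Conversely, an invariant norm N gives the length function
  |k| + [A^k = 1] N v; by irreducibility a power A^k \<noteq> 1 fixes no nonzero vector, which is what
  makes this conjugation invariant and subadditive on commuting pairs.

  An eigenvalue c with |c| = 1 produces an invariant norm |w \<bullet> x|, w a left eigenvector;
  it is positive on nonzero lattice vectors because its kernel is an invariant pure subgroup.
  If there is no such eigenvalue, extend N to the largest seminorm S on C^n with
  S (a u) \<le> |a| N u for lattice vectors u. S is again A-invariant, and a rounding argument shows
  that it still dominates N on the lattice. Writing an annihilating polynomial of z as a product
  of linear factors M - a, one peels them off: S ((M - a) y) = 0 forces S y = 0, for |a| \<noteq> 1
  because then S y = S (M y) = |a| S y, and for |a| = 1 because M - a is injective.
  Hence S = 0, contradicting positivity of N.
*)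

section \<open>Integer powers of an invertible matrix\<close>

lemma matrix_vector_mult_smult_commute:
  fixes A :: "'a::comm_semiring_1^'n^'m"
  shows "A *v (c *s x) = c *s (A *v x)"
  by (simp add: vec_eq_iff matrix_vector_mult_def mult_ac sum_distrib_left)

lemma matrix_vector_mult_uminus:
  fixes A :: "'a::ring_1^'n^'m"
  shows "A *v (- x) = - (A *v x)"
  by (simp add: vec_eq_iff matrix_vector_mult_def sum_negf)

lemma matrix_inv_right: "invertible A \<Longrightarrow> A ** matrix_inv A = mat 1"
  and matrix_inv_left: "invertible A \<Longrightarrow> matrix_inv A ** A = mat 1"
  unfolding invertible_def matrix_inv_def by (metis (mono_tags, lifting) someI_ex)+

lemma matipow_0 [simp]: "matipow A 0 = mat 1"
  by (simp add: matipow_def)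

context
  fixes A :: "'a::semiring_1^'n^'n"
  assumes A: "invertible A"
begin

lemma matipow_succ: "matipow A (k + 1) = A ** matipow A k"
proof (cases "k \<ge> 0")
  case True
  then have "nat (k + 1) = Suc (nat k)" by simp
  with True show ?thesis by (simp add: matipow_def)
next
  case False
  show ?thesis
  proof (cases "k = -1")
    case True
    then show ?thesis by (simp add: matipow_def matrix_inv_right[OF A])
  next
    case k: False
    with False have "nat (- k) = Suc (nat (- (k + 1)))" by simp
    with False k have "matipow A k = matrix_inv A ** matipow A (k + 1)"
      by (simp add: matipow_def)
    then show ?thesis by (simp add: matrix_mul_assoc matrix_inv_right[OF A])
  qed
qed

lemma matipow_pred: "matipow A (k - 1) = matrix_inv A ** matipow A k"
  using matipow_succ[of "k - 1"]
  by (simp add: matrix_mul_assoc matrix_inv_left[OF A] del: matipow_0)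

lemma matipow_add: "matipow A (a + b) = matipow A a ** matipow A b"
proof (induction a rule: int_induct[where k = 0])
  case (step1 i)
  have "matipow A (i + 1 + b) = A ** matipow A (i + b)"
    using matipow_succ[of "i + b"] by (simp add: ac_simps)
  with step1 show ?case by (simp add: matipow_succ matrix_mul_assoc)
next
  case (step2 i)
  have "matipow A (i - 1 + b) = matrix_inv A ** matipow A (i + b)"
    using matipow_pred[of "i + b"] by (simp add: algebra_simps)
  with step2 show ?case by (simp add: matipow_pred matrix_mul_assoc)
qed simp

lemma matipow_1 [simp]: "matipow A 1 = A"
  using matipow_succ[of 0] by simp

lemma matipow_commute: "matipow A a ** matipow A b = matipow A b ** matipow A a"
  by (metis matipow_add add.commute)

lemma matipow_mult_vec: "matipow A a *v (matipow A b *v v) = matipow A (a + b) *v v"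
  by (simp add: matrix_vector_mul_assoc matipow_add)

lemma matipow_neg_eq_1_iff: "matipow A (- k) = mat 1 \<longleftrightarrow> matipow A k = mat 1"
  by (metis matipow_add matipow_0 add.right_inverse matrix_mul_lid matrix_mul_rid)

lemma matipow_mult_eq_1: "matipow A k = mat 1 \<Longrightarrow> matipow A (int j * k) = mat 1"
  by (induction j) (simp_all add: algebra_simps matipow_add)

end

section \<open>The semidirect product\<close>

lemma semidirect_mult [simp]:
  "(v, k) \<otimes>\<^bsub>semidirect A\<^esub> (w, m) = (v + matipow A k *v w, k + m)"
  and semidirect_one [simp]: "\<one>\<^bsub>semidirect A\<^esub> = (0, 0)"
  and semidirect_carrier [simp]: "carrier (semidirect A) = UNIV"
  by (simp_all add: semidirect_def)

context
  fixes A :: "int^'n^'n"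
  assumes A: "invertible A"
begin

lemma group_semidirect: "group (semidirect A)"
proof (rule groupI)
  fix x y z :: "(int^'n) \<times> int"
  show "x \<otimes>\<^bsub>semidirect A\<^esub> y \<otimes>\<^bsub>semidirect A\<^esub> z = x \<otimes>\<^bsub>semidirect A\<^esub> (y \<otimes>\<^bsub>semidirect A\<^esub> z)"
    by (cases x; cases y; cases z)
      (simp add: matrix_vector_right_distrib matipow_mult_vec[OF A] add.assoc)
  show "\<exists>y\<in>carrier (semidirect A). y \<otimes>\<^bsub>semidirect A\<^esub> x = \<one>\<^bsub>semidirect A\<^esub>"
  proof (cases x)
    case (Pair v k)
    then have "(- (matipow A (- k) *v v), - k) \<otimes>\<^bsub>semidirect A\<^esub> x = \<one>\<^bsub>semidirect A\<^esub>"
      by (simp add: matipow_mult_vec[OF A])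
    then show ?thesis by (metis UNIV_I semidirect_carrier)
  qed
qed auto

interpretation semidirect: group "semidirect A"
  by (rule group_semidirect)

lemma semidirect_inv [simp]:
  "inv\<^bsub>semidirect A\<^esub> (v, k) = (- (matipow A (- k) *v v), - k)"
  by (rule semidirect.inv_equality) (simp_all add: matipow_mult_vec[OF A])

lemma semidirect_nat_pow:
  "(v, k) [^]\<^bsub>semidirect A\<^esub> (j::nat) = ((\<Sum>i<j. matipow A (int i * k) *v v), int j * k)"
  by (induction j) (simp_all add: algebra_simps)

lemma semidirect_int_pow_translation:
  "(v, 0) [^]\<^bsub>semidirect A\<^esub> (j::int) = (j *s v, 0)"
proof -
  have "(v, 0) [^]\<^bsub>semidirect A\<^esub> n = (int n *s v, 0)" for n :: nat
    by (induction n) (simp_all add: vec_eq_iff algebra_simps)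
  then show ?thesis
    by (cases "j < 0") (simp_all add: int_pow_def2 vec_eq_iff)
qed

lemma semidirect_conj:
  "(w, m) \<otimes>\<^bsub>semidirect A\<^esub> (v, k) \<otimes>\<^bsub>semidirect A\<^esub> inv\<^bsub>semidirect A\<^esub> (w, m)
     = (w + matipow A m *v v - matipow A k *v w, k)"
  by (simp add: matrix_vector_right_distrib matrix_vector_mult_uminus matipow_mult_vec[OF A])

end

section \<open>Irreducible matrices\<close>

lemma irreducible_mat_kernel_eq_0:
  fixes f :: "int^'n \<Rightarrow> 'b::ab_group_add"
  assumes irreducible: "irreducible_mat A"
    and additive: "\<And>x y. f (x + y) = f x + f y"
    and invariant: "\<And>x. f x = 0 \<Longrightarrow> f (A *v x) = 0"
    and torsion_free: "\<And>c x. c \<noteq> 0 \<Longrightarrow> f (c *s x) = 0 \<Longrightarrow> f x = 0"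
    and nonzero: "f y \<noteq> 0"
    and "f x = 0"
  shows "x = 0"
proof -
  let ?K = "{x. f x = 0}"
  have zero: "f 0 = 0" using additive[of 0 0] by simp
  have uminus: "f (- x) = - f x" for x
    using additive[of x "- x"] zero by (simp add: minus_unique)
  have "?K \<noteq> UNIV" using nonzero by blast
  moreover have "0 \<in> ?K" "\<forall>x\<in>?K. \<forall>y\<in>?K. x + y \<in> ?K" "\<forall>x\<in>?K. - x \<in> ?K"
    "\<forall>x\<in>?K. A *v x \<in> ?K" "\<forall>(c::int) x. c \<noteq> 0 \<longrightarrow> c *s x \<in> ?K \<longrightarrow> x \<in> ?K"
    by (simp_all add: zero additive uminus invariant torsion_free)
  ultimately have "?K = {0}"
    using irreducible[unfolded irreducible_mat_def not_ex, rule_format, of ?K] by blast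
  with \<open>f x = 0\<close> show ?thesis by blast
qed

lemma irreducible_mat_fixed_vector:
  fixes A X :: "int^'n^'n"
  assumes "irreducible_mat A" and "A ** X = X ** A" and "X \<noteq> mat 1" and "X *v x = x"
  shows "x = 0"
proof -
  obtain y where y: "X *v y \<noteq> y"
    using \<open>X \<noteq> mat 1\<close> matrix_eq by (metis matrix_vector_mul_lid)
  show ?thesis
  proof (rule irreducible_mat_kernel_eq_0[where f = "\<lambda>x. X *v x - x" and y = y])
    show "X *v (u + w) - (u + w) = (X *v u - u) + (X *v w - w)" for u w
      by (simp add: matrix_vector_right_distrib)
    show "X *v (A *v u) - A *v u = 0" if "X *v u - u = 0" for u
      using that \<open>A ** X = X ** A\<close> by (metis eq_iff_diff_eq_0 matrix_vector_mul_assoc)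
    show "X *v u - u = 0" if "c \<noteq> 0" and "X *v (c *s u) - c *s u = 0" for c u
      using that by (simp add: matrix_vector_mult_smult_commute vec_eq_iff)
  qed (use assms y in simp_all)
qed

lemma irreducible_matipow_fixed_vector:
  fixes A :: "int^'n^'n"
  assumes "invertible A" and "irreducible_mat A"
    and "matipow A k \<noteq> mat 1" and "matipow A k *v x = x"
  shows "x = 0"
proof (rule irreducible_mat_fixed_vector[OF assms(2) _ assms(3,4)])
  show "A ** matipow A k = matipow A k ** A"
    using matipow_commute[OF assms(1), of 1 k] by (simp add: assms(1))
qed

section \<open>Invariant norms on the lattice\<close>

locale lattice_seminorm =
  fixes N :: "int^'n \<Rightarrow> real"
  assumes subadditive: "N (x + y) \<le> N x + N y"
    and homogeneous: "N (j *s x) = \<bar>real_of_int j\<bar> * N x"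
begin

lemma zero [simp]: "N 0 = 0"
  using homogeneous[of 0 0] by simp

lemma uminus [simp]: "N (- x) = N x"
  using homogeneous[of "-1" x] by (simp add: vector_sneg_minus1[symmetric])

lemma nonneg: "0 \<le> N x"
  using subadditive[of x "- x"] by simp

end

definition invariant_lattice_norm :: "int^'n^'n \<Rightarrow> (int^'n \<Rightarrow> real) \<Rightarrow> bool" where
  "invariant_lattice_norm A N \<longleftrightarrow>
     lattice_seminorm N \<and> (\<forall>x. N (A *v x) = N x) \<and> (\<forall>x. x \<noteq> 0 \<longrightarrow> 0 < N x)"

lemma invariant_lattice_norm_of_purely_positive:
  fixes A :: "int^'n^'n"
  assumes A: "invertible A" and "purely_positive (semidirect A) l"
  shows "invariant_lattice_norm A (\<lambda>v. l (v, 0))"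
  unfolding invariant_lattice_norm_def
proof (intro conjI allI impI)
  have l_pow: "\<And>g n. l (g [^]\<^bsub>semidirect A\<^esub> (n::int)) = \<bar>real_of_int n\<bar> * l g"
    and l_conj: "\<And>g h. l (h \<otimes>\<^bsub>semidirect A\<^esub> g \<otimes>\<^bsub>semidirect A\<^esub> inv\<^bsub>semidirect A\<^esub> h) = l g"
    and l_comm: "\<And>a b. a \<otimes>\<^bsub>semidirect A\<^esub> b = b \<otimes>\<^bsub>semidirect A\<^esub> a \<Longrightarrow>
                   l (a \<otimes>\<^bsub>semidirect A\<^esub> b) \<le> l a + l b"
    and pos: "\<And>g. infinite_order (semidirect A) g \<Longrightarrow> 0 < l g"
    using assms(2) unfolding purely_positive_def length_function_def by auto
  show "lattice_seminorm (\<lambda>v. l (v, 0))"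
  proof
    fix x y :: "int^'n"
    show "l (x + y, 0) \<le> l (x, 0) + l (y, 0)"
      using l_comm[of "(x, 0)" "(y, 0)"] by (simp add: add.commute)
    fix j :: int
    show "l (j *s x, 0) = \<bar>real_of_int j\<bar> * l (x, 0)"
      using l_pow[of "(x, 0)" j] by (simp add: semidirect_int_pow_translation[OF A])
  qed
  fix x :: "int^'n"
  show "l (A *v x, 0) = l (x, 0)"
    using l_conj[of "(0, 1)" "(x, 0)"] unfolding semidirect_conj[OF A] by (simp add: A)
  assume "x \<noteq> 0"
  then have "infinite_order (semidirect A) (x, 0)"
    using semidirect_int_pow_translation[OF A, of x "int n" for n]
    by (auto simp: infinite_order_def int_pow_int vec_eq_iff)
  then show "0 < l (x, 0)" by (rule pos)
qed

lemma invariant_lattice_norm_matipow: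
  assumes A: "invertible A" and "invariant_lattice_norm A N"
  shows "N (matipow A k *v x) = N x"
proof -
  have N_A: "N (A *v x) = N x" for x
    using assms(2) by (simp add: invariant_lattice_norm_def)
  have N_inv: "N (matrix_inv A *v x) = N x" for x
    using N_A[of "matrix_inv A *v x"] by (simp add: matrix_vector_mul_assoc matrix_inv_right[OF A])
  show ?thesis
  proof (induction k rule: int_induct[where k = 0])
    case (step1 i)
    then show ?case by (simp add: matipow_succ[OF A] N_A flip: matrix_vector_mul_assoc)
  next
    case (step2 i)
    then show ?case by (simp add: matipow_pred[OF A] N_inv flip: matrix_vector_mul_assoc)
  qed simp
qed

section \<open>Length functions from invariant norms\<close>

lemma matipow_geometric_sum:
  fixes A :: "'a::ring_1^'n^'n"
  assumes A: "invertible A"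
  shows "matipow A k *v (\<Sum>i<j. matipow A (int i * k) *v v) + v
           = (\<Sum>i<j. matipow A (int i * k) *v v) + matipow A (int j * k) *v v"
proof (induction j)
  case (Suc j)
  have "k + int j * k = int (Suc j) * k" by (simp add: algebra_simps)
  with Suc show ?case
    by (simp add: matrix_vector_right_distrib matipow_mult_vec[OF A] algebra_simps)
qed simp

definition norm_length :: "int^'n^'n \<Rightarrow> (int^'n \<Rightarrow> real) \<Rightarrow> (int^'n) \<times> int \<Rightarrow> real" where
  "norm_length A N g =
     (case g of (v, k) \<Rightarrow> \<bar>real_of_int k\<bar> + (if matipow A k = mat 1 then N v else 0))"

lemma norm_length_Pair [simp]:
  "norm_length A N (v, k) = \<bar>real_of_int k\<bar> + (if matipow A k = mat 1 then N v else 0)"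
  by (simp add: norm_length_def)

context
  fixes A :: "int^'n^'n" and N :: "int^'n \<Rightarrow> real"
  assumes A: "invertible A"
    and irreducible: "irreducible_mat A"
    and norm: "invariant_lattice_norm A N"
begin

interpretation N: lattice_seminorm N
  using norm by (simp add: invariant_lattice_norm_def)

lemma norm_length_nonneg: "0 \<le> norm_length A N g"
  by (cases g) (simp add: N.nonneg)

lemma abs_le_norm_length: "\<bar>real_of_int k\<bar> \<le> norm_length A N (v, k)"
  by (simp add: N.nonneg)

lemma norm_length_inv: "norm_length A N (inv\<^bsub>semidirect A\<^esub> g) = norm_length A N g"
  by (cases g) (simp add: A matipow_neg_eq_1_iff invariant_lattice_norm_matipow[OF A norm])

lemma norm_length_nat_pow:
  "norm_length A N (g [^]\<^bsub>semidirect A\<^esub> (j::nat)) = real j * norm_length A N g"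
proof -
  obtain v k where g: "g = (v, k)" by (cases g)
  define s where "s = (\<Sum>i<j. matipow A (int i * k) *v v)"
  have pow: "(v, k) [^]\<^bsub>semidirect A\<^esub> j = (s, int j * k)"
    by (simp add: s_def semidirect_nat_pow[OF A])
  consider "matipow A k = mat 1" | "matipow A k \<noteq> mat 1" "matipow A (int j * k) = mat 1"
    | "matipow A k \<noteq> mat 1" "matipow A (int j * k) \<noteq> mat 1"
    by blast
  then show ?thesis
  proof cases
    case 1
    then have "matipow A (int j * k) = mat 1" by (rule matipow_mult_eq_1[OF A])
    have "s = (\<Sum>i<j. v)"
      using 1 by (simp add: s_def matipow_mult_eq_1[OF A])
    also have "\<dots> = int j *s v"
      by (induction j) (simp_all add: vec_eq_iff algebra_simps)
    finally show ?thesis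
      using 1 \<open>matipow A (int j * k) = mat 1\<close>
      by (simp add: g pow N.homogeneous abs_mult distrib_left)
  next
    case 2
    then have "matipow A k *v s = s"
      using matipow_geometric_sum[OF A, where k = k and j = j and v = v] by (simp add: s_def)
    with 2 have "s = 0" by (intro irreducible_matipow_fixed_vector[OF A irreducible])
    with 2 show ?thesis by (simp add: g pow abs_mult)
  next
    case 3
    then show ?thesis by (simp add: g pow abs_mult)
  qed
qed

lemma norm_length_int_pow:
  "norm_length A N (g [^]\<^bsub>semidirect A\<^esub> (n::int)) = \<bar>real_of_int n\<bar> * norm_length A N g"
proof (cases "n < 0")
  case True
  then have "g [^]\<^bsub>semidirect A\<^esub> n = inv\<^bsub>semidirect A\<^esub> (g [^]\<^bsub>semidirect A\<^esub> nat (- n))"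
    unfolding int_pow_def2 by (rule if_P)
  with True show ?thesis by (simp only: norm_length_inv norm_length_nat_pow) simp
next
  case False
  then have "g [^]\<^bsub>semidirect A\<^esub> n = g [^]\<^bsub>semidirect A\<^esub> nat n"
    unfolding int_pow_def2 by (rule if_not_P)
  with False show ?thesis by (simp only: norm_length_nat_pow) simp
qed

lemma norm_length_conj:
  "norm_length A N (h \<otimes>\<^bsub>semidirect A\<^esub> g \<otimes>\<^bsub>semidirect A\<^esub> inv\<^bsub>semidirect A\<^esub> h) = norm_length A N g"
proof -
  obtain v k w m where g: "g = (v, k)" and h: "h = (w, m)" by (cases g; cases h)
  show ?thesis
    unfolding g h semidirect_conj[OF A] by (simp add: invariant_lattice_norm_matipow[OF A norm])
qed

lemma norm_length_mult_commuting:
  assumes "a \<otimes>\<^bsub>semidirect A\<^esub> b = b \<otimes>\<^bsub>semidirect A\<^esub> a"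
  shows "norm_length A N (a \<otimes>\<^bsub>semidirect A\<^esub> b) \<le> norm_length A N a + norm_length A N b"
proof -
  obtain v k w m where a: "a = (v, k)" and b: "b = (w, m)" by (cases a; cases b)
  have commute: "v + matipow A k *v w = w + matipow A m *v v"
    using assms by (simp add: a b)
  have triangle: "\<bar>real_of_int (k + m)\<bar> \<le> \<bar>real_of_int k\<bar> + \<bar>real_of_int m\<bar>"
    by linarith
  consider "matipow A (k + m) \<noteq> mat 1" | "matipow A (k + m) = mat 1" "matipow A k = mat 1"
    | "matipow A (k + m) = mat 1" "matipow A k \<noteq> mat 1"
    by blast
  then show ?thesis
  proof cases
    case 1
    then show ?thesis
      using triangle abs_le_norm_length[where k = k and v = v] abs_le_norm_length[where k = m and v = w]
      by (simp add: a b)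
  next
    case 2
    then have "matipow A m = mat 1" by (simp add: matipow_add[OF A])
    with 2 show ?thesis using triangle N.subadditive[of v w] by (simp add: a b)
  next
    case 3
    have "matipow A k *v (v + matipow A k *v w) = matipow A k *v w + matipow A (k + m) *v v"
      unfolding commute by (simp add: matrix_vector_right_distrib matipow_mult_vec[OF A])
    also have "\<dots> = v + matipow A k *v w" using 3 by simp
    finally have "v + matipow A k *v w = 0"
      using 3 by (intro irreducible_matipow_fixed_vector[OF A irreducible])
    with 3 show ?thesis
      using triangle abs_le_norm_length[where k = k and v = v] abs_le_norm_length[where k = m and v = w]
      by (simp add: a b)
  qed
qed

lemma length_function_norm_length: "length_function (semidirect A) (norm_length A N)"
  unfolding length_function_def
  by (intro conjI ballI allI impI norm_length_nonneg norm_length_int_pow norm_length_conj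
      norm_length_mult_commuting)

lemma purely_positive_norm_length: "purely_positive (semidirect A) (norm_length A N)"
  unfolding purely_positive_def
proof (intro conjI ballI impI length_function_norm_length)
  fix g assume "infinite_order (semidirect A) g"
  obtain v k where g: "g = (v, k)" by (cases g)
  have "(v, k) [^]\<^bsub>semidirect A\<^esub> (1::nat) \<noteq> (0, 0)"
    using \<open>infinite_order (semidirect A) g\<close> unfolding g infinite_order_def
    by (metis semidirect_one zero_less_one)
  then have "v \<noteq> 0 \<or> k \<noteq> 0"
    by (simp add: semidirect_nat_pow[OF A])
  moreover have "0 < N v" if "v \<noteq> 0"
    using norm that by (simp add: invariant_lattice_norm_def)
  ultimately show "0 < norm_length A N g"
    using N.nonneg[of v] by (auto simp: g add_pos_nonneg)
qed

end

section \<open>Invariant norms from eigenvalues on the unit circle\<close>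

lemma mat_mult_vec: "mat c *v v = c *s (v :: 'a::semiring_1^'n)"
  by (simp add: vec_eq_iff matrix_vector_mult_def mat_def if_distrib[of "\<lambda>x. x * _"] cong: if_cong)

lemma invertible_transpose_iff:
  fixes A :: "'a::field^'n^'n"
  shows "invertible (transpose A) \<longleftrightarrow> invertible A"
  by (metis invertible_right_inverse invertible_left_inverse right_invertible_transpose)

lemma left_eigenvector:
  fixes M :: "'a::field^'n^'n"
  assumes "v \<noteq> 0" and "M *v v = c *s v"
  shows "\<exists>w. w \<noteq> 0 \<and> w v* M = c *s w"
proof -
  let ?X = "M - mat c"
  have "?X *v v = 0"
    using assms(2) by (simp add: matrix_vector_mult_diff_rdistrib mat_mult_vec)
  with assms(1) have "\<not> invertible ?X"
    by (metis invertible_left_inverse matrix_left_invertible_ker)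
  then have "\<not> (\<forall>w. transpose ?X *v w = 0 \<longrightarrow> w = 0)"
    by (metis invertible_transpose_iff invertible_left_inverse matrix_left_invertible_ker)
  then obtain w where "w \<noteq> 0" and "transpose ?X *v w = 0"
    by blast
  moreover have "transpose ?X = transpose M - mat c"
    by (simp add: vec_eq_iff transpose_def mat_def)
  ultimately have "transpose M *v w = c *s w"
    unfolding eq_iff_diff_eq_0[of "transpose M *v w"]
    by (simp only: matrix_vector_mult_diff_rdistrib mat_mult_vec)
  with \<open>w \<noteq> 0\<close> show ?thesis
    by (metis transpose_matrix_vector)
qed

lemma sum_mult_matrix_vector:
  fixes M :: "'a::comm_semiring_1^'n^'n"
  shows "(\<Sum>i\<in>UNIV. w $ i * (M *v y) $ i) = (\<Sum>j\<in>UNIV. (w v* M) $ j * y $ j)"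
  unfolding matrix_vector_mult_def vector_matrix_mult_def
  by (simp add: sum_distrib_left sum_distrib_right mult_ac) (rule sum.swap)

definition lattice_pairing :: "complex^'n \<Rightarrow> int^'n \<Rightarrow> complex" where
  "lattice_pairing w x = (\<Sum>i\<in>UNIV. w $ i * of_int (x $ i))"

lemma lattice_pairing_add: "lattice_pairing w (x + y) = lattice_pairing w x + lattice_pairing w y"
  by (simp add: lattice_pairing_def algebra_simps sum.distrib)

lemma lattice_pairing_smult: "lattice_pairing w (j *s x) = of_int j * lattice_pairing w x"
  by (simp add: lattice_pairing_def sum_distrib_left algebra_simps)

lemma lattice_pairing_axis: "lattice_pairing w (axis i 1) = w $ i"
  by (simp add: lattice_pairing_def axis_def if_distrib cong: if_cong)

lemma lattice_pairing_left_eigenvector: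
  assumes "w v* cmat A = c *s w"
  shows "lattice_pairing w (A *v x) = c * lattice_pairing w x"
proof -
  have "lattice_pairing w (A *v x) = (\<Sum>i\<in>UNIV. w $ i * (cmat A *v (\<chi> i. of_int (x $ i))) $ i)"
    by (simp add: lattice_pairing_def cmat_def matrix_vector_mult_def)
  also have "\<dots> = c * lattice_pairing w x"
    by (simp add: sum_mult_matrix_vector assms lattice_pairing_def sum_distrib_left mult_ac)
  finally show ?thesis .
qed

lemma invariant_lattice_norm_of_unit_eigenvalue:
  fixes A :: "int^'n^'n"
  assumes irreducible: "irreducible_mat A"
    and "cmod c = 1" and "v \<noteq> 0" and "cmat A *v v = c *s v"
  shows "\<exists>N. invariant_lattice_norm A N"
proof -
  obtain w where "w \<noteq> 0" and w: "w v* cmat A = c *s w"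
    using left_eigenvector assms(3,4) by blast
  then obtain i where "w $ i \<noteq> 0"
    by (auto simp: vec_eq_iff)
  then have kernel: "lattice_pairing w x = 0 \<Longrightarrow> x = 0" for x
    by (intro irreducible_mat_kernel_eq_0[OF irreducible, of "lattice_pairing w" "axis i 1"])
      (simp_all add: lattice_pairing_add lattice_pairing_smult lattice_pairing_axis
        lattice_pairing_left_eigenvector[OF w])
  have "lattice_seminorm (\<lambda>x. cmod (lattice_pairing w x))"
    by standard (simp_all add: lattice_pairing_add lattice_pairing_smult norm_triangle_ineq norm_mult)
  moreover have "cmod (lattice_pairing w (A *v x)) = cmod (lattice_pairing w x)" for x
    by (simp add: lattice_pairing_left_eigenvector[OF w] norm_mult \<open>cmod c = 1\<close>)
  moreover have "x \<noteq> 0 \<Longrightarrow> 0 < cmod (lattice_pairing w x)" for x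
    using kernel by auto
  ultimately show ?thesis
    unfolding invariant_lattice_norm_def
    by (intro exI[of _ "\<lambda>x. cmod (lattice_pairing w x)"] conjI allI impI) simp_all
qed

section \<open>Extending a lattice seminorm to complex vectors\<close>

definition cvec :: "int^'n \<Rightarrow> complex^'n" where
  "cvec x = (\<chi> i. of_int (x $ i))"

lemma cvec_axis: "cvec (axis i 1) = axis i 1"
  by (simp add: cvec_def vec_eq_iff axis_def)

lemma cvec_matrix_vector_mult: "cvec (X *v x) = cmat X *v cvec x"
  by (simp add: cvec_def cmat_def vec_eq_iff matrix_vector_mult_def)

lemma cmat_mult: "cmat (X ** Y) = cmat X ** cmat Y"
  by (simp add: cmat_def vec_eq_iff matrix_matrix_mult_def)

lemma cmat_one: "cmat (mat 1) = mat 1"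
  by (simp add: cmat_def vec_eq_iff mat_def)

definition lattice_combination :: "(complex \<times> (int^'n)) list \<Rightarrow> complex^'n" where
  "lattice_combination ps = (\<Sum>(a, u)\<leftarrow>ps. a *s cvec u)"

lemma lattice_combination_append [simp]:
  "lattice_combination (ps @ qs) = lattice_combination ps + lattice_combination qs"
  by (simp add: lattice_combination_def)

lemma lattice_combination_exists:
  fixes z :: "complex^'n"
  shows "\<exists>ps. lattice_combination ps = z"
proof -
  obtain idx :: "'n list" where "set idx = UNIV" and "distinct idx"
    using finite_distinct_list[of "UNIV :: 'n set"] by auto
  then have "lattice_combination (map (\<lambda>i. (z $ i, axis i 1)) idx) = (\<Sum>i\<in>UNIV. z $ i *s axis i 1)"
    by (simp add: lattice_combination_def o_def cvec_axis sum_list_distinct_conv_sum_set)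
  then show ?thesis
    by (metis basis_expansion)
qed

lemma le_of_forall_mult_le_add:
  fixes a b K :: real
  assumes "\<And>d::nat. real d * a \<le> real d * b + K"
  shows "a \<le> b"
proof (rule ccontr)
  assume "\<not> a \<le> b"
  obtain d :: nat where "K / (a - b) < real d"
    using reals_Archimedean2 by blast
  with \<open>\<not> a \<le> b\<close> have "K < real d * (a - b)"
    by (simp add: field_simps)
  with assms[of d] show False
    by (simp add: algebra_simps)
qed

lemma rounding_error_coordinate_bound:
  assumes "\<And>i. real_of_int (x $ i) = (\<Sum>j\<in>F. r j * real_of_int (u j $ i))"
  shows "\<bar>real_of_int ((int d *s x - (\<Sum>j\<in>F. \<lfloor>real d * r j\<rfloor> *s u j)) $ i)\<bar>
           \<le> (\<Sum>j\<in>F. \<bar>real_of_int (u j $ i)\<bar>)"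
proof -
  let ?frac = "\<lambda>j. real d * r j - \<lfloor>real d * r j\<rfloor>"
  have "real_of_int ((int d *s x - (\<Sum>j\<in>F. \<lfloor>real d * r j\<rfloor> *s u j)) $ i)
          = real d * real_of_int (x $ i) - (\<Sum>j\<in>F. \<lfloor>real d * r j\<rfloor> * real_of_int (u j $ i))"
    by simp
  also have "\<dots> = (\<Sum>j\<in>F. ?frac j * real_of_int (u j $ i))"
    by (simp add: assms sum_distrib_left left_diff_distrib sum_subtractf mult.assoc)
  finally have "\<bar>real_of_int ((int d *s x - (\<Sum>j\<in>F. \<lfloor>real d * r j\<rfloor> *s u j)) $ i)\<bar>
                  = \<bar>\<Sum>j\<in>F. ?frac j * real_of_int (u j $ i)\<bar>"
    by simp
  also have "\<dots> \<le> (\<Sum>j\<in>F. \<bar>?frac j * real_of_int (u j $ i)\<bar>)"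
    by (rule sum_abs)
  also have "\<dots> \<le> (\<Sum>j\<in>F. \<bar>real_of_int (u j $ i)\<bar>)"
  proof (intro sum_mono)
    fix j
    have "0 \<le> ?frac j" "?frac j \<le> 1" by linarith+
    then show "\<bar>?frac j * real_of_int (u j $ i)\<bar> \<le> \<bar>real_of_int (u j $ i)\<bar>"
      by (simp add: abs_mult mult_left_le_one_le)
  qed
  finally show ?thesis .
qed

context lattice_seminorm
begin

lemma sum_le: "N (\<Sum>j\<in>F. f j) \<le> (\<Sum>j\<in>F. N (f j))"
proof (induction F rule: infinite_finite_induct)
  case (insert a F)
  then show ?case using subadditive[of "f a" "sum f F"] by simp
qed simp_all

lemma le_sum_coordinates: "N e \<le> (\<Sum>i\<in>UNIV. \<bar>real_of_int (e $ i)\<bar> * N (axis i 1))"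
proof -
  have "N e = N (\<Sum>i\<in>UNIV. (e $ i) *s axis i 1)"
    by (simp add: basis_expansion)
  also have "\<dots> \<le> (\<Sum>i\<in>UNIV. N ((e $ i) *s axis i 1))"
    by (rule sum_le)
  finally show ?thesis
    by (simp add: homogeneous)
qed

(* Round d r_j down to integers p_j: the error d x - \<Sum> p_j u_j has coordinates bounded
   independently of d. *)
lemma real_combination_rounding_bound:
  assumes "finite F" and x: "\<And>i. real_of_int (x $ i) = (\<Sum>j\<in>F. r j * real_of_int (u j $ i))"
  shows "real d * N x \<le> real d * (\<Sum>j\<in>F. \<bar>r j\<bar> * N (u j))
           + ((\<Sum>j\<in>F. N (u j)) + (\<Sum>i\<in>UNIV. (\<Sum>j\<in>F. \<bar>real_of_int (u j $ i)\<bar>) * N (axis i 1)))"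
proof -
  define p where "p j = \<lfloor>real d * r j\<rfloor>" for j
  define e where "e = int d *s x - (\<Sum>j\<in>F. p j *s u j)"
  have "N e \<le> (\<Sum>i\<in>UNIV. \<bar>real_of_int (e $ i)\<bar> * N (axis i 1))"
    by (rule le_sum_coordinates)
  also have "\<dots> \<le> (\<Sum>i\<in>UNIV. (\<Sum>j\<in>F. \<bar>real_of_int (u j $ i)\<bar>) * N (axis i 1))"
    using rounding_error_coordinate_bound[OF x] nonneg
    by (intro sum_mono mult_right_mono) (simp_all add: e_def p_def)
  finally have e: "N e \<le> (\<Sum>i\<in>UNIV. (\<Sum>j\<in>F. \<bar>real_of_int (u j $ i)\<bar>) * N (axis i 1))" .
  have p: "\<bar>real_of_int (p j)\<bar> \<le> real d * \<bar>r j\<bar> + 1" for j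
  proof -
    have "\<bar>real_of_int (p j)\<bar> \<le> \<bar>real d * r j\<bar> + 1"
      unfolding p_def by linarith
    then show ?thesis by (simp add: abs_mult)
  qed
  have "real d * N x = N (e + (\<Sum>j\<in>F. p j *s u j))"
    by (simp add: e_def homogeneous)
  also have "\<dots> \<le> N e + (\<Sum>j\<in>F. \<bar>real_of_int (p j)\<bar> * N (u j))"
    using subadditive[of e "\<Sum>j\<in>F. p j *s u j"] sum_le[of "\<lambda>j. p j *s u j" F]
    by (simp add: homogeneous)
  also have "\<dots> \<le> N e + (\<Sum>j\<in>F. (real d * \<bar>r j\<bar> + 1) * N (u j))"
    using p nonneg by (intro add_left_mono sum_mono mult_right_mono) auto
  also have "\<dots> = N e + real d * (\<Sum>j\<in>F. \<bar>r j\<bar> * N (u j)) + (\<Sum>j\<in>F. N (u j))"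
    by (simp add: algebra_simps sum.distrib sum_distrib_left)
  finally show ?thesis
    using e by simp
qed

lemma le_real_combination:
  assumes "finite F" and "\<And>i. real_of_int (x $ i) = (\<Sum>j\<in>F. r j * real_of_int (u j $ i))"
  shows "N x \<le> (\<Sum>j\<in>F. \<bar>r j\<bar> * N (u j))"
  using real_combination_rounding_bound[OF assms] by (rule le_of_forall_mult_le_add)

lemma le_complex_combination:
  assumes "finite F" and "cvec x = (\<Sum>j\<in>F. a j *s cvec (u j))"
  shows "N x \<le> (\<Sum>j\<in>F. cmod (a j) * N (u j))"
proof -
  have "real_of_int (x $ i) = (\<Sum>j\<in>F. Re (a j) * real_of_int (u j $ i))" for i
  proof -
    have "of_int (x $ i) = (\<Sum>j\<in>F. a j * of_int (u j $ i))"
      using arg_cong[OF assms(2), of "\<lambda>z. z $ i"] by (simp add: cvec_def)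
    then have "Re (of_int (x $ i)) = Re (\<Sum>j\<in>F. a j * of_int (u j $ i))"
      by simp
    then show ?thesis
      by simp
  qed
  then have "N x \<le> (\<Sum>j\<in>F. \<bar>Re (a j)\<bar> * N (u j))"
    by (rule le_real_combination[OF assms(1)])
  also have "\<dots> \<le> (\<Sum>j\<in>F. cmod (a j) * N (u j))"
    by (intro sum_mono mult_right_mono abs_Re_le_cmod nonneg)
  finally show ?thesis .
qed

definition combination_weight :: "(complex \<times> (int^'n)) list \<Rightarrow> real" where
  "combination_weight ps = (\<Sum>(a, u)\<leftarrow>ps. cmod a * N u)"

definition extension :: "complex^'n \<Rightarrow> real" where
  "extension z = Inf (combination_weight ` {ps. lattice_combination ps = z})"

lemma combination_weight_nonneg: "0 \<le> combination_weight ps"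
  unfolding combination_weight_def
  by (induction ps) (auto intro!: add_nonneg_nonneg mult_nonneg_nonneg nonneg)

lemma combination_weight_append [simp]:
  "combination_weight (ps @ qs) = combination_weight ps + combination_weight qs"
  by (simp add: combination_weight_def)

lemma extension_le: "lattice_combination ps = z \<Longrightarrow> extension z \<le> combination_weight ps"
  unfolding extension_def
  by (rule cInf_lower) (auto intro: bdd_belowI[where m = 0] combination_weight_nonneg)

lemma extension_greatest:
  "(\<And>ps. lattice_combination ps = z \<Longrightarrow> c \<le> combination_weight ps) \<Longrightarrow> c \<le> extension z"
  unfolding extension_def
  by (rule cInf_greatest) (use lattice_combination_exists in auto)

lemma extension_nonneg: "0 \<le> extension z"
  by (rule extension_greatest) (rule combination_weight_nonneg)

lemma extension_subadditive: "extension (z + y) \<le> extension z + extension y"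
proof -
  have shifted: "extension (z + y) - combination_weight qs \<le> extension z"
    if "lattice_combination qs = y" for qs
  proof (rule extension_greatest)
    fix ps assume "lattice_combination ps = z"
    with that have "extension (z + y) \<le> combination_weight (ps @ qs)"
      by (intro extension_le) simp
    then show "extension (z + y) - combination_weight qs \<le> combination_weight ps"
      by simp
  qed
  have "extension (z + y) - extension z \<le> extension y"
  proof (rule extension_greatest)
    fix qs assume "lattice_combination qs = y"
    from shifted[OF this] show "extension (z + y) - extension z \<le> combination_weight qs"
      by linarith
  qed
  then show ?thesis by simp
qed

lemma extension_scale_le: "extension (c *s z) \<le> cmod c * extension z"
proof (cases "c = 0")
  case True
  have "extension 0 \<le> combination_weight []"
    by (rule extension_le) (simp add: lattice_combination_def)
  with True show ?thesis
    by (simp add: combination_weight_def)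
next
  case False
  let ?scale = "map (\<lambda>(a, u). (c * a, u))"
  have "extension (c *s z) / cmod c \<le> extension z"
  proof (rule extension_greatest)
    fix ps assume "lattice_combination ps = z"
    then have "lattice_combination (?scale ps) = c *s z"
      unfolding lattice_combination_def
      by (induction ps arbitrary: z) (auto simp: vector_add_ldistrib vector_smult_assoc)
    moreover have "combination_weight (?scale ps) = cmod c * combination_weight ps"
      unfolding combination_weight_def
      by (induction ps) (auto simp: norm_mult algebra_simps)
    ultimately have "extension (c *s z) \<le> cmod c * combination_weight ps"
      by (metis extension_le)
    then show "extension (c *s z) / cmod c \<le> combination_weight ps"
      using False by (simp add: field_simps)
  qed
  then show ?thesis
    using False by (simp add: field_simps)
qed

lemma extension_scale: "extension (c *s z) = cmod c * extension z"
proof (cases "c = 0")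
  case True
  then show ?thesis
    using extension_scale_le[of 0 z] extension_nonneg[of "0 *s z"] by simp
next
  case False
  have "extension z = extension (inverse c *s (c *s z))"
    using False by (simp add: vector_smult_assoc)
  also have "\<dots> \<le> cmod (inverse c) * extension (c *s z)"
    by (rule extension_scale_le)
  finally have "cmod c * extension z \<le> extension (c *s z)"
    using False by (simp add: norm_inverse norm_divide field_simps)
  with extension_scale_le[of c z] show ?thesis
    by simp
qed

lemma extension_matrix_le:
  assumes "\<And>x. N (X *v x) = N x"
  shows "extension (cmat X *v z) \<le> extension z"
proof (rule extension_greatest)
  fix ps assume "lattice_combination ps = z"
  let ?map = "map (\<lambda>(a, u). (a, X *v u))"
  have "lattice_combination (?map ps) = cmat X *v lattice_combination ps"
    unfolding lattice_combination_def
    by (induction ps) (auto simp: matrix_vector_right_distrib matrix_vector_mult_smult_commute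
        cvec_matrix_vector_mult)
  moreover have "combination_weight (?map ps) = combination_weight ps"
    unfolding combination_weight_def by (induction ps) (auto simp: assms)
  ultimately show "extension (cmat X *v z) \<le> combination_weight ps"
    using extension_le \<open>lattice_combination ps = z\<close> by metis
qed

lemma extension_invertible_matrix:
  assumes "invertible X" and N_X: "\<And>x. N (X *v x) = N x"
  shows "extension (cmat X *v z) = extension z"
proof (rule antisym)
  show "extension (cmat X *v z) \<le> extension z"
    using N_X by (rule extension_matrix_le)
  have "N (matrix_inv X *v x) = N x" for x
    using N_X[of "matrix_inv X *v x"]
    by (simp add: matrix_vector_mul_assoc matrix_inv_right[OF assms(1)])
  then have "extension (cmat (matrix_inv X) *v (cmat X *v z)) \<le> extension (cmat X *v z)"
    by (rule extension_matrix_le)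
  then show "extension z \<le> extension (cmat X *v z)"
    by (simp add: matrix_vector_mul_assoc matrix_inv_left[OF assms(1)] cmat_one flip: cmat_mult)
qed

lemma le_extension: "N x \<le> extension (cvec x)"
proof (rule extension_greatest)
  fix ps assume "lattice_combination ps = cvec x"
  then have "cvec x = (\<Sum>j<length ps. fst (ps ! j) *s cvec (snd (ps ! j)))"
    by (simp add: lattice_combination_def sum_list_sum_nth atLeast0LessThan case_prod_beta)
  then have "N x \<le> (\<Sum>j<length ps. cmod (fst (ps ! j)) * N (snd (ps ! j)))"
    by (intro le_complex_combination) simp_all
  also have "\<dots> = combination_weight ps"
    by (simp add: combination_weight_def sum_list_sum_nth atLeast0LessThan case_prod_beta)
  finally show "N x \<le> combination_weight ps" .
qed

end

section \<open>Annihilating polynomials\<close>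

definition poly_mat_apply :: "'a::field^'n^'n \<Rightarrow> 'a poly \<Rightarrow> 'a^'n \<Rightarrow> 'a^'n" where
  "poly_mat_apply M p z = (\<Sum>i\<le>degree p. coeff p i *s (matpow M i *v z))"

lemma poly_mat_apply_eq_sum:
  assumes "degree p < m"
  shows "poly_mat_apply M p z = (\<Sum>i<m. coeff p i *s (matpow M i *v z))"
  unfolding poly_mat_apply_def
  by (rule sum.mono_neutral_left) (use assms in \<open>auto simp: coeff_eq_0\<close>)

lemma poly_mat_apply_add: "poly_mat_apply M (p + q) z = poly_mat_apply M p z + poly_mat_apply M q z"
proof -
  define m where "m = Suc (max (degree p) (degree q))"
  have "degree (p + q) < m" "degree p < m" "degree q < m"
    using degree_add_le_max[of p q] by (auto simp: m_def)
  then show ?thesis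
    by (simp add: poly_mat_apply_eq_sum[where m = m] vector_sadd_rdistrib sum.distrib)
qed

lemma poly_mat_apply_smult: "poly_mat_apply M (smult a p) z = a *s poly_mat_apply M p z"
proof -
  have "degree (smult a p) < Suc (degree p)"
    using degree_smult_le[of a p] by auto
  then show ?thesis
    by (simp add: poly_mat_apply_eq_sum[where m = "Suc (degree p)"] vec.scale_sum_right vector_smult_assoc
        del: sum.lessThan_Suc)
qed

lemma poly_mat_apply_pCons_0: "poly_mat_apply M (pCons 0 p) z = M *v poly_mat_apply M p z"
proof -
  have "poly_mat_apply M (pCons 0 p) z
          = (\<Sum>i<Suc (Suc (degree p)). coeff (pCons 0 p) i *s (matpow M i *v z))"
    by (rule poly_mat_apply_eq_sum) simp
  also have "\<dots> = (\<Sum>i<Suc (degree p). coeff p i *s (matpow M (Suc i) *v z))"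
    by (subst sum.lessThan_Suc_shift) simp
  also have "\<dots> = M *v poly_mat_apply M p z"
    by (simp add: poly_mat_apply_eq_sum[where m = "Suc (degree p)"] vec.sum vector_scalar_commute
        matrix_vector_mul_assoc del: sum.lessThan_Suc)
  finally show ?thesis .
qed

lemma poly_mat_apply_linear_factor:
  "poly_mat_apply M ([:- a, 1:] * p) z = M *v poly_mat_apply M p z - a *s poly_mat_apply M p z"
proof -
  have "[:- a, 1:] * p = smult (- a) p + pCons 0 p"
    by simp
  then show ?thesis
    by (simp only: poly_mat_apply_add poly_mat_apply_smult poly_mat_apply_pCons_0
        vector_smult_lneg) simp
qed

fun linear_factors_apply :: "'a::field^'n^'n \<Rightarrow> 'a list \<Rightarrow> 'a^'n \<Rightarrow> 'a^'n" where
  "linear_factors_apply M [] z = z"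
| "linear_factors_apply M (a # as) z =
     M *v linear_factors_apply M as z - a *s linear_factors_apply M as z"

lemma poly_mat_apply_prod_linear_factors:
  "poly_mat_apply M (\<Prod>a\<leftarrow>as. [:- a, 1:]) z = linear_factors_apply M as z"
proof (induction as)
  case Nil
  then show ?case by (simp add: poly_mat_apply_def)
next
  case (Cons a as)
  then show ?case
    by (simp only: list.map prod_list.Cons poly_mat_apply_linear_factor linear_factors_apply.simps)
qed

lemma linear_factors_apply_Cons':
  "linear_factors_apply M (a # as) z = linear_factors_apply M as (M *v z - a *s z)"
proof -
  have "linear_factors_apply M as (M *v z - a *s z)
          = M *v linear_factors_apply M as z - a *s linear_factors_apply M as z"
    by (induction as) (simp_all add: matrix_vector_mult_diff_distrib vector_scalar_commute
        vector_ssub_ldistrib vector_smult_assoc mult.commute)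
  then show ?thesis by simp
qed

lemma poly_mat_apply_monom_sum:
  "poly_mat_apply M (\<Sum>k\<le>n. monom (c k) k) z = (\<Sum>k\<le>n. c k *s (matpow M k *v z))"
proof -
  let ?p = "\<Sum>k\<le>n. monom (c k) k"
  have coeff_p: "coeff ?p k = (if k \<le> n then c k else 0)" for k
    by (simp add: coeff_sum coeff_monom)
  then have "degree ?p < Suc n"
    using degree_le[of n ?p] by simp
  then show ?thesis
    by (simp add: poly_mat_apply_eq_sum[where m = "Suc n"] coeff_p lessThan_Suc_atMost
        del: sum.lessThan_Suc)
qed

lemma matpow_orbit_dependent:
  fixes M :: "'a::field^'n^'n"
  shows "\<exists>c i. i \<le> CARD('n) \<and> c i \<noteq> 0 \<and> (\<Sum>k\<le>CARD('n). c k *s (matpow M k *v z)) = 0"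
proof -
  define f where "f k = matpow M k *v z" for k
  define n where "n = CARD('n)"
  show ?thesis
  proof (cases "inj_on f {..n}")
    case True
    then have "card (f ` {..n}) = Suc n"
      by (simp add: card_image)
    moreover have "vec.dim (f ` {..n}) \<le> n"
      using vec.dim_subset_UNIV[of "f ` {..n}"] by (simp add: vec.dimension_def card_cart_basis n_def)
    ultimately have "vec.dependent (f ` {..n})"
      by (intro vec.dependent_biggerset_general) simp
    then obtain c where c: "(\<Sum>v\<in>f ` {..n}. c v *s v) = 0" and "\<exists>v\<in>f ` {..n}. c v \<noteq> 0"
      using vec.independent_explicit by blast
    moreover from this obtain i where "i \<le> n" and "c (f i) \<noteq> 0"
      by blast
    ultimately show ?thesis
      using True unfolding n_def f_def
      by (intro exI[of _ "\<lambda>k. c (f k)"] exI[of _ i]) (simp add: f_def sum.reindex)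
  next
    case False
    then obtain i j where "i \<le> n" "j \<le> n" "i \<noteq> j" "f i = f j"
      unfolding inj_on_def by auto
    then have "(\<Sum>k\<le>n. ((if k = i then 1 else 0) - (if k = j then 1 else 0)) *s f k) = 0"
      by (simp add: vector_sub_rdistrib sum_subtractf if_distrib[of "\<lambda>c. c *s _"] cong: if_cong)
    with \<open>i \<le> n\<close> \<open>i \<noteq> j\<close> show ?thesis
      unfolding n_def f_def
      by (intro exI[of _ "\<lambda>k. (if k = i then 1 else 0) - (if k = j then 1 else 0)"] exI[of _ i])
        simp
  qed
qed

lemma poly_mat_apply_annihilator:
  fixes M :: "'a::field^'n^'n"
  shows "\<exists>p. p \<noteq> 0 \<and> poly_mat_apply M p z = 0"
proof -
  obtain c i where "i \<le> CARD('n)" and "c i \<noteq> 0"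
    and c: "(\<Sum>k\<le>CARD('n). c k *s (matpow M k *v z)) = 0"
    using matpow_orbit_dependent by blast
  let ?p = "\<Sum>k\<le>CARD('n). monom (c k) k"
  have "coeff ?p i \<noteq> 0"
    using \<open>i \<le> CARD('n)\<close> \<open>c i \<noteq> 0\<close> by (simp add: coeff_sum coeff_monom)
  then show ?thesis
    using c by (intro exI[of _ ?p]) (auto simp: poly_mat_apply_monom_sum)
qed

lemma linear_factors_annihilator:
  fixes M :: "complex^'n^'n"
  shows "\<exists>as. linear_factors_apply M as z = 0"
proof -
  obtain p where "p \<noteq> 0" and p: "poly_mat_apply M p z = 0"
    using poly_mat_apply_annihilator by blast
  obtain as where as: "mset as = proots p"
    using ex_mset by blast
  have "p = smult (lead_coeff p) (\<Prod>a\<leftarrow>as. [:- a, 1:])"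
    using complex_poly_decompose_multiset[of p] as
    by (metis mset_map prod_mset_prod_list)
  with p have "lead_coeff p *s linear_factors_apply M as z = 0"
    by (metis poly_mat_apply_smult poly_mat_apply_prod_linear_factors)
  with \<open>p \<noteq> 0\<close> show ?thesis
    by auto
qed

section \<open>Invariant seminorms without eigenvalues on the unit circle\<close>

locale invariant_seminorm =
  fixes M :: "complex^'n^'n" and S :: "complex^'n \<Rightarrow> real"
  assumes subadditive: "S (z + y) \<le> S z + S y"
    and scale: "S (c *s z) = cmod c * S z"
    and invariant: "S (M *v z) = S z"
begin

lemma uminus: "S (- z) = S z"
  using scale[of "-1" z] by (simp add: vector_sneg_minus1[symmetric])

lemma nonneg: "0 \<le> S z"
  using subadditive[of z "- z"] scale[of 0 0] uminus[of z] by simp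

lemma eq_0_of_linear_factor:
  assumes y: "S (M *v z - a *s z) = 0" and "cmod a \<noteq> 1"
  shows "S z = 0"
proof -
  consider "cmod a < 1" | "cmod a > 1"
    using \<open>cmod a \<noteq> 1\<close> by linarith
  then have "S z \<le> 0"
  proof cases
    case 1
    have "S z = S ((M *v z - a *s z) + a *s z)"
      by (simp add: invariant)
    also have "\<dots> \<le> cmod a * S z"
      using subadditive[of "M *v z - a *s z" "a *s z"] y by (simp add: scale)
    finally have "(1 - cmod a) * S z \<le> 0"
      by (simp add: algebra_simps)
    with 1 show ?thesis
      by (simp add: mult_le_0_iff)
  next
    case 2
    have "cmod a * S z = S (M *v z - (M *v z - a *s z))"
      by (simp add: scale)
    also have "\<dots> \<le> S (M *v z) + S (- (M *v z - a *s z))"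
      using subadditive[of "M *v z" "- (M *v z - a *s z)"] by simp
    also have "\<dots> = S z"
      using y by (simp only: uminus invariant)
    finally have "(cmod a - 1) * S z \<le> 0"
      by (simp add: algebra_simps)
    with 2 show ?thesis
      by (simp add: mult_le_0_iff)
  qed
  with nonneg[of z] show ?thesis
    by simp
qed

lemma eq_0:
  assumes no_unit_eigenvalue: "\<And>c v. cmod c = 1 \<Longrightarrow> M *v v = c *s v \<Longrightarrow> v = 0"
  shows "S z = 0"
proof -
  have "S z = 0" if "linear_factors_apply M as z = 0" for as
    using that
  proof (induction as arbitrary: z)
    case Nil
    then show ?case using scale[of 0 0] by simp
  next
    case (Cons a as)
    show ?case
    proof (cases "cmod a = 1")
      case True
      have "M *v linear_factors_apply M as z = a *s linear_factors_apply M as z"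
        using Cons.prems by simp
      with True have "linear_factors_apply M as z = 0"
        by (rule no_unit_eigenvalue)
      then show ?thesis
        by (rule Cons.IH)
    next
      case False
      have "linear_factors_apply M as (M *v z - a *s z) = 0"
        using Cons.prems by (simp only: linear_factors_apply_Cons'[symmetric])
      then have "S (M *v z - a *s z) = 0"
        by (rule Cons.IH)
      then show ?thesis
        using False by (rule eq_0_of_linear_factor)
    qed
  qed
  then show ?thesis
    using linear_factors_annihilator by blast
qed

end

lemma unit_eigenvalue_of_invariant_lattice_norm:
  fixes A :: "int^'n^'n"
  assumes A: "invertible A" and norm: "invariant_lattice_norm A N"
  shows "\<exists>c::complex. cmod c = 1 \<and> (\<exists>v. v \<noteq> 0 \<and> cmat A *v v = c *s v)"
proof (rule ccontr)
  assume no_unit_eigenvalue: "\<not> ?thesis"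
  interpret N: lattice_seminorm N
    using norm by (simp add: invariant_lattice_norm_def)
  have "N.extension (cmat A *v z) = N.extension z" for z
    using norm by (intro N.extension_invertible_matrix[OF A]) (simp add: invariant_lattice_norm_def)
  then have extension_0: "N.extension z = 0" for z
    using no_unit_eigenvalue
    by (intro invariant_seminorm.eq_0[where M = "cmat A"] invariant_seminorm.intro
        N.extension_subadditive N.extension_scale) auto
  obtain i :: 'n where True by blast
  have "0 < N (axis i 1)"
    using norm by (simp add: invariant_lattice_norm_def axis_eq_0_iff)
  also have "\<dots> \<le> N.extension (cvec (axis i 1))"
    by (rule N.le_extension)
  finally show False
    by (simp add: extension_0)
qed

theorem corollary13:
  fixes A :: "int^'n^'n"
  assumes "invertible A"
    and "irreducible_mat A"
  shows "(\<exists>l. purely_positive (semidirect A) l) \<longleftrightarrow>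
         (\<exists>c::complex. cmod c = 1 \<and> (\<exists>v::complex^'n. v \<noteq> 0 \<and> cmat A *v v = c *s v))"
proof
  assume "\<exists>l. purely_positive (semidirect A) l"
  then obtain l where "purely_positive (semidirect A) l" ..
  then have "invariant_lattice_norm A (\<lambda>v. l (v, 0))"
    by (rule invariant_lattice_norm_of_purely_positive[OF assms(1)])
  then show "\<exists>c::complex. cmod c = 1 \<and> (\<exists>v. v \<noteq> 0 \<and> cmat A *v v = c *s v)"
    by (rule unit_eigenvalue_of_invariant_lattice_norm[OF assms(1)])
next
  assume "\<exists>c::complex. cmod c = 1 \<and> (\<exists>v. v \<noteq> 0 \<and> cmat A *v v = c *s v)"
  then obtain N where "invariant_lattice_norm A N"
    using invariant_lattice_norm_of_unit_eigenvalue[OF assms(2)] by blast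
  then show "\<exists>l. purely_positive (semidirect A) l"
    using purely_positive_norm_length[OF assms] by blast
qed

end
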